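(* Let $t_1,t_2,t_3\in\mathbb{C}$ with $|t_1|=|t_2|$ and $|t_3|=1$, and let $H$ be the lattice operator with the rank-three coupling $B_3,A_3$ in which $S=0$. Then $[0,+\infty)\subset\sigma(H)$.
   Context: Fix $a>0$. Let $\Gamma$ be the square-lattice graph in $\mathbb{R}^2$ with vertex set $\{(ma,na): m,n\in\mathbb{Z}\}$ and edges the segments of length $a$ joining two vertices that differ by $a$ in exactly one coordinate. The Hilbert space is $L^2(\Gamma)=\bigoplus_{e}L^2(e)$, and the operator acts as $-\frac{d^2}{dx^2}$ on each edge, with domain consisting of functions that are $W^{2,2}$ on each edge and satisfy, at every vertex $v$, $A\Psi_v+B\Psi'_v=0$. Here $\Psi_v\in\mathbb{C}^4$ is the vector of boundary values at $v$ on the four edges emanating from $v$, ordered as (left, right, lower, upper), and $\Psi'_v$ is the vector of derivatives at $v$ taken in the direction pointing away from $v$. The rank-three coupling is $$B_3=\begin{pmatrix}1&0&0&t_1\\0&1&0&t_2\\0&0&1&t_3\\0&0&0&0\end{pmatrix},\qquad A_3=-\begin{pmatrix}S&0\\-(\overline{t_1},\overline{t_2},\overline{t_3})&1\end{pmatrix},$$ where $S\in\mathbb{C}^{3\times3}$ is Hermitian and $t_j\in\mathbb{C}$; the same matrices are used at every vertex. *)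

theory Defs
  imports "HOL-Analysis.Analysis"
begin

text \<open>Edges of the square lattice with spacing a: (m,n,True) is the horizontal
edge from (m a, n a) to ((m+1) a, n a); (m,n,False) is the vertical edge from
(m a, n a) to (m a, (n+1) a).  Each edge is parametrised by x in [0,a], with x=0 at
the lower/left endpoint.\<close>

type_synonym edge = "int \<times> int \<times> bool"
type_synonym gfun = "edge \<Rightarrow> real \<Rightarrow> complex"

definition sq_int :: "real \<Rightarrow> (real \<Rightarrow> complex) \<Rightarrow> bool" where
  "sq_int a f \<longleftrightarrow> set_borel_measurable lborel {0..a} f \<and>
     set_integrable lborel {0..a} (\<lambda>x. (cmod (f x))\<^sup>2)"

definition edge_norm2 :: "real \<Rightarrow> (real \<Rightarrow> complex) \<Rightarrow> real" where
  "edge_norm2 a f = (LINT x:{0..a}|lborel. (cmod (f x))\<^sup>2)"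

definition L2G :: "real \<Rightarrow> gfun \<Rightarrow> bool" where
  "L2G a \<psi> \<longleftrightarrow> (\<forall>e. sq_int a (\<psi> e)) \<and> (\<lambda>e. edge_norm2 a (\<psi> e)) summable_on UNIV"

definition gnorm2 :: "real \<Rightarrow> gfun \<Rightarrow> real" where
  "gnorm2 a \<psi> = (\<Sum>\<^sub>\<infinity>e. edge_norm2 a (\<psi> e))"

text \<open>Rank-three coupling matrices (indices 0..3), ordering (left,right,lower,upper).\<close>
definition B3 :: "complex \<Rightarrow> complex \<Rightarrow> complex \<Rightarrow> nat \<Rightarrow> nat \<Rightarrow> complex" where
  "B3 t1 t2 t3 i j =
     (if i < 3 \<and> j < 3 then (if i = j then 1 else 0)
      else if i < 3 \<and> j = 3 then [t1, t2, t3] ! i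
      else 0)"

definition A3 :: "(nat \<Rightarrow> nat \<Rightarrow> complex) \<Rightarrow> complex \<Rightarrow> complex \<Rightarrow> complex \<Rightarrow> nat \<Rightarrow> nat \<Rightarrow> complex" where
  "A3 S t1 t2 t3 i j = - (if i < 3 \<and> j < 3 then S i j
      else if i < 3 \<and> j = 3 then 0
      else if i = 3 \<and> j < 3 then - cnj ([t1, t2, t3] ! j)
      else 1)"

text \<open>The operator H (acting as -d^2/dx^2 on each edge), given as its graph:
  lattice_op a A B psi h  means  psi in Dom(H) and H psi = h.
  Each psi e is W^{2,2} on [0,a], written as psi e x = c0 + c1 x - int_0^x (x-s) h e s
  with h e in L^2(0,a), so that psi e '' = - h e and psi e ' x = c1 - int_0^x h e.
  Vertex conditions A Psi_v + B Psi'_v = 0 with outgoing derivatives.\<close>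
definition lattice_op :: "real \<Rightarrow> (nat \<Rightarrow> nat \<Rightarrow> complex) \<Rightarrow> (nat \<Rightarrow> nat \<Rightarrow> complex)
     \<Rightarrow> gfun \<Rightarrow> gfun \<Rightarrow> bool" where
  "lattice_op a A B \<psi> h \<longleftrightarrow> L2G a \<psi> \<and> L2G a h \<and>
     (\<exists>c0 c1 :: edge \<Rightarrow> complex.
        (\<forall>e. \<forall>x\<in>{0..a}. \<psi> e x = c0 e + c1 e * of_real x
              - (LINT s:{0..x}|lborel. of_real (x - s) * h e s)) \<and>
        (\<forall>m n::int.
           let bv = [\<psi> (m-1,n,True) a, \<psi> (m,n,True) 0, \<psi> (m,n-1,False) a, \<psi> (m,n,False) 0];
               dv = [- (c1 (m-1,n,True) - (LINT s:{0..a}|lborel. h (m-1,n,True) s)),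
                     c1 (m,n,True),
                     - (c1 (m,n-1,False) - (LINT s:{0..a}|lborel. h (m,n-1,False) s)),
                     c1 (m,n,False)]
           in \<forall>i<4. (\<Sum>j<4. A i j * bv ! j + B i j * dv ! j) = 0))"

definition lattice_resolvent :: "real \<Rightarrow> (nat \<Rightarrow> nat \<Rightarrow> complex) \<Rightarrow> (nat \<Rightarrow> nat \<Rightarrow> complex)
     \<Rightarrow> complex \<Rightarrow> bool" where
  "lattice_resolvent a A B z \<longleftrightarrow>
     (\<forall>f. L2G a f \<longrightarrow> (\<exists>\<psi> h. lattice_op a A B \<psi> h \<and>
          (\<forall>e. AE x in lborel. x \<in> {0..a} \<longrightarrow> h e x - z * \<psi> e x = f e x))) \<and>
     (\<exists>C. \<forall>\<psi> h. lattice_op a A B \<psi> h \<longrightarrow>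
          gnorm2 a \<psi> \<le> C * gnorm2 a (\<lambda>e x. h e x - z * \<psi> e x))"

definition lattice_spectrum :: "real \<Rightarrow> (nat \<Rightarrow> nat \<Rightarrow> complex) \<Rightarrow> (nat \<Rightarrow> nat \<Rightarrow> complex)
     \<Rightarrow> complex set" where
  "lattice_spectrum a A B = {z. \<not> lattice_resolvent a A B z}"

end

theory Submission
  imports Defs
begin

(* Every z = k^2 with k >= 0 is an approximate eigenvalue of H, hence lies in
   the spectrum (H - z cannot have a bounded inverse).  With eta = e^{ika} the coupling
   admits the bounded "plane wave" generalized eigenfunction that equals
   amp(e) e^{ikx} on edge e, where amp is a Bloch-type amplitude, -t2 p^m q^n on
   horizontal and p^m q^n on vertical edges (p = -eta t2/t1, q = eta/t3, both of
   modulus one): at each vertex its boundary values are proportional to (t1,-t2,t3,1) and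
   its outgoing derivatives to (-t1,-t2,-t3,1), which satisfies A3 Psi + B3 Psi' = 0
   precisely because |t1| = |t2| and |t3| = 1.  Truncating it to an N x N box, with a
   smooth cosine cut-off on the edges leaving the box, keeps the vertex conditions (the
   data at each vertex just get multiplied by the box indicator) and yields a Weyl
   sequence: the norm squared grows like a N^2, the defect (H - k^2) psi lives on the
   at most 4N boundary edges, so its norm squared grows only like N. *)

lemma continuous_set_integrable:
  fixes f :: "real \<Rightarrow> 'b::{banach, second_countable_topology}"
  assumes "continuous_on UNIV f"
  shows "set_integrable lborel {c..y} f"
  unfolding set_integrable_def
  by (rule borel_integrable_compact) (auto intro: continuous_on_subset[OF assms])

lemma set_integral_derivative:
  fixes f f' :: "real \<Rightarrow> complex"
  assumes d: "\<And>t. (f has_vector_derivative f' t) (at t)" and c: "continuous_on UNIV f'"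
    and y: "0 \<le> y"
  shows "(LINT s:{0..y}|lborel. f' s) = f y - f 0"
proof -
  have "(LINT s:{0..y}|lborel. f' s) = integral {0..y} f'"
    by (rule set_borel_integral_eq_integral(2)[OF continuous_set_integrable[OF c]])
  also have "\<dots> = f y - f 0"
    by (rule integral_unique, rule fundamental_theorem_of_calculus[OF y])
       (auto intro: has_vector_derivative_at_within d)
  finally show ?thesis .
qed

text \<open>First-order Taylor expansion with integral remainder; this is the form in which
  the domain of H is described.\<close>
lemma taylor_integral_remainder:
  fixes f f1 f2 :: "real \<Rightarrow> complex"
  assumes d1: "\<And>t. (f has_vector_derivative f1 t) (at t)"
    and d2: "\<And>t. (f1 has_vector_derivative f2 t) (at t)"
    and c: "continuous_on UNIV f2" and y: "0 \<le> y"
  shows "f y = f 0 + f1 0 * of_real y + (LINT s:{0..y}|lborel. of_real (y - s) * f2 s)"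
proof -
  define g where "g s = (y - s) *\<^sub>R f1 s + f s" for s
  have dg: "(g has_vector_derivative (of_real (y - s) * f2 s)) (at s)" for s
  proof -
    have "(g has_vector_derivative ((y - s) *\<^sub>R f2 s + (-1) *\<^sub>R f1 s + f1 s)) (at s)"
      unfolding g_def by (auto intro!: derivative_eq_intros d1 d2)
    thus ?thesis by (simp add: scaleR_conv_of_real)
  qed
  have "continuous_on UNIV (\<lambda>s. of_real (y - s) * f2 s)"
    by (intro continuous_intros c)
  hence "(LINT s:{0..y}|lborel. of_real (y - s) * f2 s) = g y - g 0"
    by (rule set_integral_derivative[OF dg _ y])
  thus ?thesis by (simp add: g_def scaleR_conv_of_real)
qed

lemma continuous_sq_int:
  assumes "continuous_on UNIV f"
  shows "sq_int a f"
proof -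
  have "set_integrable lborel {0..a} f" by (rule continuous_set_integrable[OF assms])
  hence "set_borel_measurable lborel {0..a} f"
    unfolding set_integrable_def set_borel_measurable_def by (rule borel_measurable_integrable)
  moreover have "set_integrable lborel {0..a} (\<lambda>x. (cmod (f x))\<^sup>2)"
    by (rule continuous_set_integrable) (intro continuous_intros assms)
  ultimately show ?thesis unfolding sq_int_def by simp
qed

lemma edge_norm2_nonneg: "0 \<le> edge_norm2 a f"
  unfolding edge_norm2_def set_lebesgue_integral_def by (auto intro!: integral_nonneg_AE)

lemma gnorm2_nonneg: "0 \<le> gnorm2 a \<psi>"
  unfolding gnorm2_def by (rule infsum_nonneg) (rule edge_norm2_nonneg)

lemma L2G_finite_support:
  assumes "\<And>e. continuous_on UNIV (g e)" "finite S" "\<And>e. e \<notin> S \<Longrightarrow> g e = (\<lambda>x. 0)"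
  shows "L2G a g"
proof -
  have "(\<lambda>e. edge_norm2 a (g e)) summable_on S" using assms(2) by simp
  moreover have "(\<lambda>e. edge_norm2 a (g e)) summable_on S \<longleftrightarrow>
                 (\<lambda>e. edge_norm2 a (g e)) summable_on UNIV"
    by (rule summable_on_cong_neutral) (auto simp: assms(3) edge_norm2_def)
  ultimately show ?thesis unfolding L2G_def using continuous_sq_int assms(1) by auto
qed

definition vertex_cond :: "(nat \<Rightarrow> nat \<Rightarrow> complex) \<Rightarrow> (nat \<Rightarrow> nat \<Rightarrow> complex)
    \<Rightarrow> complex list \<Rightarrow> complex list \<Rightarrow> bool" where
  "vertex_cond A B bv dv \<longleftrightarrow> (\<forall>i<4. (\<Sum>j<4. A i j * bv ! j + B i j * dv ! j) = 0)"

text \<open>The graph of H in terms of vertex_cond: psi e x = base e + slope e x - int_0^x (x-s) h e s,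
  so slope e is the derivative of psi e at the left/lower end and
  slope_end e = slope e - int_0^a h e the one at the right/upper end.\<close>
lemma lattice_op_intro:
  assumes "L2G a \<psi>" "L2G a h"
    and "\<forall>e. \<forall>x\<in>{0..a}. \<psi> e x = base e + slope e * of_real x
                 - (LINT s:{0..x}|lborel. of_real (x - s) * h e s)"
    and "\<And>e. slope_end e = slope e - (LINT s:{0..a}|lborel. h e s)"
    and "\<forall>m n. vertex_cond A B
           [\<psi> (m-1,n,True) a, \<psi> (m,n,True) 0, \<psi> (m,n-1,False) a, \<psi> (m,n,False) 0]
           [- slope_end (m-1,n,True), slope (m,n,True), - slope_end (m,n-1,False), slope (m,n,False)]"
  shows "lattice_op a A B \<psi> h"
  unfolding lattice_op_def Let_def
  using assms(1-3) assms(5)[unfolded vertex_cond_def assms(4)]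
  by (intro conjI exI[of _ base] exI[of _ slope]) blast+

text \<open>At the left/lower
  end of an edge the outgoing derivative is psi', at the right/upper end it is -psi'(a).\<close>
lemma lattice_op_smooth:
  fixes \<psi> \<psi>' h :: gfun
  assumes d1: "\<And>e x. (\<psi> e has_vector_derivative \<psi>' e x) (at x)"
    and d2: "\<And>e x. (\<psi>' e has_vector_derivative - h e x) (at x)"
    and cont: "\<And>e. continuous_on UNIV (h e)"
    and fin: "finite S" and supp: "\<And>e. e \<notin> S \<Longrightarrow> \<psi> e = (\<lambda>x. 0) \<and> h e = (\<lambda>x. 0)"
    and vc: "\<And>m n. vertex_cond A B
               [\<psi> (m-1,n,True) a, \<psi> (m,n,True) 0, \<psi> (m,n-1,False) a, \<psi> (m,n,False) 0]
               [- \<psi>' (m-1,n,True) a, \<psi>' (m,n,True) 0, - \<psi>' (m,n-1,False) a, \<psi>' (m,n,False) 0]"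
    and a: "0 \<le> a"
  shows "lattice_op a A B \<psi> h"
proof -
  have cont_\<psi>: "continuous_on UNIV (\<psi> e)" for e
    using d1 by (meson continuous_at_imp_continuous_on has_vector_derivative_continuous)
  have cont_neg_h: "continuous_on UNIV (\<lambda>x. - h e x)" for e
    by (intro continuous_intros cont)
  have taylor: "\<psi> e x = \<psi> e 0 + \<psi>' e 0 * of_real x
                 - (LINT s:{0..x}|lborel. of_real (x - s) * h e s)" if "0 \<le> x" for e x
  proof -
    have "set_integrable lborel {0..x} (\<lambda>s. of_real (x - s) * h e s)"
      by (rule continuous_set_integrable) (intro continuous_intros cont)
    hence "(LINT s:{0..x}|lborel. of_real (x - s) * - h e s)
           = - (LINT s:{0..x}|lborel. of_real (x - s) * h e s)"
      by (simp add: set_integral_uminus)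
    thus ?thesis using taylor_integral_remainder[OF d1 d2 cont_neg_h that] by simp
  qed
  have derivative_at_end: "\<psi>' e a = \<psi>' e 0 - (LINT s:{0..a}|lborel. h e s)" for e
  proof -
    have "- (LINT s:{0..a}|lborel. h e s) = (LINT s:{0..a}|lborel. - h e s)"
      by (rule set_integral_uminus[OF continuous_set_integrable[OF cont], symmetric])
    also have "(LINT s:{0..a}|lborel. - h e s) = \<psi>' e a - \<psi>' e 0"
      by (rule set_integral_derivative[OF d2 cont_neg_h a])
    finally show ?thesis by (simp add: algebra_simps)
  qed
  have "L2G a \<psi>" by (rule L2G_finite_support[OF cont_\<psi> fin]) (use supp in blast)
  moreover have "L2G a h" by (rule L2G_finite_support[OF cont fin]) (use supp in blast)
  ultimately show ?thesis
  proof (rule lattice_op_intro[where base = "\<lambda>e. \<psi> e 0" and slope = "\<lambda>e. \<psi>' e 0"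
          and slope_end = "\<lambda>e. \<psi>' e a"])
    show "\<forall>e. \<forall>x\<in>{0..a}. \<psi> e x = \<psi> e 0 + \<psi>' e 0 * of_real x
                 - (LINT s:{0..x}|lborel. of_real (x - s) * h e s)"
      by (intro allI ballI taylor) simp
  qed (use derivative_at_end vc in blast)+
qed

text \<open>Approximate eigenvalues belong to the spectrum: if (H - z) psi can be made
  arbitrarily small relative to psi, then H - z has no bounded inverse.\<close>
lemma approximate_eigenvalue_in_spectrum:
  assumes "\<And>\<epsilon>. \<epsilon> > 0 \<Longrightarrow> \<exists>\<psi> h. lattice_op a A B \<psi> h \<and> 0 < gnorm2 a \<psi> \<and>
             gnorm2 a (\<lambda>e x. h e x - z * \<psi> e x) \<le> \<epsilon> * gnorm2 a \<psi>"
  shows "z \<in> lattice_spectrum a A B"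
proof (rule ccontr)
  assume "z \<notin> lattice_spectrum a A B"
  then obtain C where bound: "\<And>\<psi> h. lattice_op a A B \<psi> h \<Longrightarrow>
      gnorm2 a \<psi> \<le> C * gnorm2 a (\<lambda>e x. h e x - z * \<psi> e x)"
    unfolding lattice_spectrum_def lattice_resolvent_def by blast
  define \<epsilon> where "\<epsilon> = 1 / (\<bar>C\<bar> + 1)"
  have "\<epsilon> > 0" by (simp add: \<epsilon>_def add_pos_nonneg)
  then obtain \<psi> h where op: "lattice_op a A B \<psi> h" and pos: "0 < gnorm2 a \<psi>"
      and small: "gnorm2 a (\<lambda>e x. h e x - z * \<psi> e x) \<le> \<epsilon> * gnorm2 a \<psi>"
    using assms by blast
  have "gnorm2 a \<psi> \<le> \<bar>C\<bar> * gnorm2 a (\<lambda>e x. h e x - z * \<psi> e x)"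
    using bound[OF op] gnorm2_nonneg[of a] by (smt (verit) abs_ge_self mult_right_mono)
  also have "\<dots> \<le> \<bar>C\<bar> * (\<epsilon> * gnorm2 a \<psi>)" by (rule mult_left_mono[OF small]) simp
  also have "\<dots> < gnorm2 a \<psi>"
    using pos by (simp add: \<epsilon>_def field_simps)
  finally show False by simp
qed

text \<open>The last row is the flux balance and needs |t1| = |t2|, |t3| = 1.\<close>
lemma coupling_admits_plane_wave:
  fixes t1 t2 t3 u v :: complex
  assumes n12: "cmod t1 = cmod t2" and n3: "cmod t3 = 1"
  shows "vertex_cond (A3 (\<lambda>i j. 0) t1 t2 t3) (B3 t1 t2 t3)
           [u * t1, - (u * t2), u * t3, u] [- (v * t1), - (v * t2), - (v * t3), v]"
proof -
  have sum4: "(\<Sum>j<4. f j) = f 0 + f 1 + f 2 + f 3" for f :: "nat \<Rightarrow> complex"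
    by (simp add: eval_nat_numeral)
  have rows: "i < 4 \<Longrightarrow> i = 0 \<or> i = 1 \<or> i = 2 \<or> i = 3" for i :: nat by auto
  have n1: "cnj t1 * t1 = cnj t2 * t2"
    using n12 by (metis complex_norm_square mult.commute)
  have n3': "cnj t3 * t3 = 1"
    using n3 by (metis complex_norm_square mult.commute of_real_1 power_one)
  have "cnj t1 * (u * t1) - cnj t2 * (u * t2) + cnj t3 * (u * t3) - u
        = u * ((cnj t1 * t1 - cnj t2 * t2) + (cnj t3 * t3 - 1))"
    by (simp add: algebra_simps)
  hence flux: "cnj t1 * (u * t1) - cnj t2 * (u * t2) + cnj t3 * (u * t3) - u = 0"
    by (simp add: n1 n3')
  show ?thesis unfolding vertex_cond_def
  proof (intro allI impI)
    fix i :: nat assume "i < 4"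
    with rows consider "i = 0" | "i = 1" | "i = 2" | "i = 3" by blast
    thus "(\<Sum>j<4. A3 (\<lambda>i j. 0) t1 t2 t3 i j * [u * t1, - (u * t2), u * t3, u] ! j +
             B3 t1 t2 t3 i j * [- (v * t1), - (v * t2), - (v * t3), v] ! j) = 0"
      using flux by cases (simp_all add: sum4 A3_def B3_def algebra_simps)
  qed
qed

text \<open>The damped wave c(x) e^{ikx} is used on edges leaving the box: for
  b = pi/a it agrees to first order with e^{ikx} at x = 0 and vanishes to first order at
  x = a.\<close>
definition wave :: "real \<Rightarrow> real \<Rightarrow> complex" where
  "wave k x = exp (\<i> * (of_real k * of_real x))"
definition bump :: "real \<Rightarrow> real \<Rightarrow> real" where "bump b x = (1 + cos (b * x)) / 2"
definition bump1 :: "real \<Rightarrow> real \<Rightarrow> real" where "bump1 b x = - b * sin (b * x) / 2"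
definition bump2 :: "real \<Rightarrow> real \<Rightarrow> real" where "bump2 b x = - (b^2) * cos (b * x) / 2"
definition dwave :: "real \<Rightarrow> real \<Rightarrow> real \<Rightarrow> complex" where
  "dwave b k x = of_real (bump b x) * wave k x"
definition dwave1 :: "real \<Rightarrow> real \<Rightarrow> real \<Rightarrow> complex" where
  "dwave1 b k x = of_real (bump1 b x) * wave k x + of_real (bump b x) * (\<i> * of_real k * wave k x)"
definition dwave2 :: "real \<Rightarrow> real \<Rightarrow> real \<Rightarrow> complex" where
  "dwave2 b k x = of_real (bump2 b x) * wave k x + 2 * of_real (bump1 b x) * (\<i> * of_real k * wave k x)
     + of_real (bump b x) * (- of_real (k^2) * wave k x)"

lemma wave_deriv: "(wave k has_vector_derivative (\<i> * of_real k * wave k x)) (at x)"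
proof -
  have "((\<lambda>z. exp (\<i> * (of_real k * z))) has_field_derivative (\<i> * of_real k * wave k x))
          (at (of_real x))"
    by (auto intro!: derivative_eq_intros simp: wave_def)
  from has_vector_derivative_real_field[OF this] show ?thesis
    by (simp add: wave_def[abs_def])
qed

lemma wave1_deriv:
  "((\<lambda>x. \<i> * of_real k * wave k x) has_vector_derivative (- of_real (k^2) * wave k x)) (at x)"
proof -
  have "((\<lambda>x. (\<i> * of_real k) * wave k x) has_vector_derivative
          ((\<i> * of_real k) * (\<i> * of_real k * wave k x))) (at x)"
    by (auto intro!: derivative_eq_intros wave_deriv)
  thus ?thesis by (simp add: power2_eq_square algebra_simps)
qed

lemma bump_deriv: "(bump b has_real_derivative bump1 b x) (at x)"
  unfolding bump_def[abs_def] bump1_def by (auto intro!: derivative_eq_intros)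

lemma bump1_deriv: "(bump1 b has_real_derivative bump2 b x) (at x)"
  unfolding bump1_def[abs_def] bump2_def
  by (auto intro!: derivative_eq_intros simp: power2_eq_square)

lemma dwave_deriv: "(dwave b k has_vector_derivative dwave1 b k x) (at x)"
proof -
  have "((\<lambda>x. of_real (bump b x) * wave k x) has_vector_derivative
     (of_real (bump b x) * (\<i> * of_real k * wave k x) + of_real (bump1 b x) * wave k x)) (at x)"
    by (rule has_vector_derivative_mult[OF has_vector_derivative_of_real[OF bump_deriv] wave_deriv])
  thus ?thesis unfolding dwave1_def dwave_def[abs_def] by (simp add: algebra_simps)
qed

lemma dwave1_deriv: "(dwave1 b k has_vector_derivative dwave2 b k x) (at x)"
proof -
  have "((\<lambda>x. of_real (bump1 b x) * wave k x + of_real (bump b x) * (\<i> * of_real k * wave k x))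
     has_vector_derivative
     ((of_real (bump1 b x) * (\<i> * of_real k * wave k x) + of_real (bump2 b x) * wave k x) +
      (of_real (bump b x) * (- of_real (k^2) * wave k x)
        + of_real (bump1 b x) * (\<i> * of_real k * wave k x)))) (at x)"
    by (intro has_vector_derivative_add
          has_vector_derivative_mult[OF has_vector_derivative_of_real[OF bump1_deriv] wave_deriv]
          has_vector_derivative_mult[OF has_vector_derivative_of_real[OF bump_deriv] wave1_deriv])
  thus ?thesis unfolding dwave1_def[abs_def] dwave2_def by (simp add: algebra_simps)
qed

lemma wave_continuous: "continuous_on UNIV (wave k)"
  unfolding wave_def[abs_def] by (intro continuous_intros)

lemma dwave2_continuous: "continuous_on UNIV (dwave2 b k)"
  unfolding dwave2_def[abs_def] bump_def bump1_def bump2_def wave_def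
  by (auto intro!: continuous_intros)

lemma norm_wave [simp]: "cmod (wave k x) = 1"
  unfolding wave_def by (metis norm_exp_i_times of_real_mult)

lemma wave_0 [simp]: "wave k 0 = 1"
  by (simp add: wave_def)

lemma dwave_ends:
  assumes "b * a = pi"
  shows "dwave b k 0 = 1" "dwave1 b k 0 = \<i> * of_real k"
    and "dwave b k a = 0" "dwave1 b k a = 0"
  using assms by (simp_all add: dwave_def dwave1_def bump_def bump1_def)

definition edge_src :: "edge \<Rightarrow> int \<times> int" where
  "edge_src e = (case e of (m, n, d) \<Rightarrow> (m, n))"
definition edge_tgt :: "edge \<Rightarrow> int \<times> int" where
  "edge_tgt e = (case e of (m, n, d) \<Rightarrow> if d then (m + 1, n) else (m, n + 1))"

definition defect_profile :: "real \<Rightarrow> real \<Rightarrow> real" where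
  "defect_profile a k = edge_norm2 a (\<lambda>x. dwave2 (pi / a) k x + of_real (k^2) * dwave (pi / a) k x)"

context
  fixes a k :: real and t1 t2 t3 :: complex and N :: int
  assumes a_pos: "a > 0" and t12: "cmod t1 = cmod t2" and t3: "cmod t3 = 1"
begin

text \<open>Phase gained along one edge, and the Bloch multipliers of the plane wave in the
  horizontal and vertical direction (for t1 = 0 also t2 = 0 and the horizontal edges carry
  nothing, so any multiplier of modulus one works).\<close>
definition "eta = wave k a"
definition "bloch_h = (if t1 = 0 then 1 else - (eta * t2 / t1))"
definition "bloch_v = eta / t3"

definition amp :: "edge \<Rightarrow> complex" where
  "amp e = (case e of (m, n, d) \<Rightarrow> (if d then - t2 else 1) * bloch_h powi m * bloch_v powi n)"

definition in_box :: "int \<times> int \<Rightarrow> complex" where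
  "in_box v = (if 0 \<le> fst v \<and> fst v < N \<and> 0 \<le> snd v \<and> snd v < N then 1 else 0)"

text \<open>On each edge the truncated wave equals in_box(src) amp e^{ikx} near the source and
  in_box(tgt) amp e^{ikx} near the target; the damped wave interpolates between them.\<close>
definition "amp_src e = in_box (edge_src e) * amp e"
definition "amp_tgt e = in_box (edge_tgt e) * amp e"
definition "amp_jump e = amp_src e - amp_tgt e"

definition psi :: gfun where
  "psi e x = amp_jump e * dwave (pi / a) k x + amp_tgt e * wave k x"
definition psi1 :: gfun where
  "psi1 e x = amp_jump e * dwave1 (pi / a) k x + amp_tgt e * (\<i> * of_real k * wave k x)"
definition psi2 :: gfun where
  "psi2 e x = amp_jump e * dwave2 (pi / a) k x + amp_tgt e * (- of_real (k^2) * wave k x)"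

lemma psi_deriv: "(psi e has_vector_derivative psi1 e x) (at x)"
  unfolding psi_def[abs_def] psi1_def
  by (intro has_vector_derivative_add has_vector_derivative_mult_right dwave_deriv wave_deriv)

lemma psi1_deriv: "(psi1 e has_vector_derivative psi2 e x) (at x)"
  unfolding psi1_def[abs_def] psi2_def
  by (intro has_vector_derivative_add has_vector_derivative_mult_right dwave1_deriv wave1_deriv)

lemma psi2_continuous: "continuous_on UNIV (psi2 e)"
  unfolding psi2_def[abs_def] by (intro continuous_intros dwave2_continuous wave_continuous)

lemma cutoff_frequency: "pi / a * a = pi"
  using a_pos by simp

lemma psi_ends:
  "psi e 0 = amp_src e" "psi e a = amp_tgt e * eta"
  "psi1 e 0 = \<i> * of_real k * amp_src e" "psi1 e a = \<i> * of_real k * eta * amp_tgt e"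
  by (simp_all add: psi_def psi1_def dwave_ends[OF cutoff_frequency] amp_jump_def eta_def
      algebra_simps)

lemma eta_nonzero: "eta \<noteq> 0"
  by (simp add: eta_def wave_def)

lemma bloch_nonzero: "bloch_h \<noteq> 0" "bloch_v \<noteq> 0"
  using eta_nonzero t12 t3 by (auto simp: bloch_h_def bloch_v_def)

lemma amp_from_left: "amp (m - 1, n, True) * eta = t1 * (bloch_h powi m * bloch_v powi n)"
proof (cases "t1 = 0")
  case True
  then have "t2 = 0" using t12 by simp
  thus ?thesis unfolding amp_def using True by simp
next
  case False
  then have "t2 \<noteq> 0" using t12 by auto
  hence ratio: "- t2 * eta / bloch_h = t1"
    using False eta_nonzero by (simp add: bloch_h_def field_simps)
  have "bloch_h powi (m - 1) = bloch_h powi m / bloch_h"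
    using bloch_nonzero by (simp add: power_int_diff)
  hence "amp (m - 1, n, True) * eta = (- t2 * eta / bloch_h) * (bloch_h powi m * bloch_v powi n)"
    by (simp add: amp_def)
  thus ?thesis unfolding ratio .
qed

lemma amp_from_below: "amp (m, n - 1, False) * eta = t3 * (bloch_h powi m * bloch_v powi n)"
proof -
  have "bloch_v powi (n - 1) = bloch_v powi n / bloch_v"
    using bloch_nonzero by (simp add: power_int_diff)
  thus ?thesis using t3 eta_nonzero bloch_nonzero
    by (auto simp: amp_def bloch_v_def field_simps)
qed

text \<open>At every vertex the data of the truncated wave are in_box(v) times the plane-wave
  data, so the vertex conditions hold everywhere.\<close>
lemma psi_vertex_cond:
  "vertex_cond (A3 (\<lambda>i j. 0) t1 t2 t3) (B3 t1 t2 t3)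
     [psi (m-1,n,True) a, psi (m,n,True) 0, psi (m,n-1,False) a, psi (m,n,False) 0]
     [- psi1 (m-1,n,True) a, psi1 (m,n,True) 0, - psi1 (m,n-1,False) a, psi1 (m,n,False) 0]"
proof -
  define u where "u = in_box (m, n) * (bloch_h powi m * bloch_v powi n)"
  define v where "v = \<i> * of_real k * u"
  have "psi (m-1,n,True) a = u * t1" "- psi1 (m-1,n,True) a = - (v * t1)"
    using amp_from_left[of m n]
    by (simp_all add: psi_ends amp_tgt_def edge_tgt_def u_def v_def algebra_simps)
  moreover have "psi (m,n-1,False) a = u * t3" "- psi1 (m,n-1,False) a = - (v * t3)"
    using amp_from_below[of m n]
    by (simp_all add: psi_ends amp_tgt_def edge_tgt_def u_def v_def algebra_simps)
  moreover have "psi (m,n,True) 0 = - (u * t2)" "psi1 (m,n,True) 0 = - (v * t2)"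
    "psi (m,n,False) 0 = u" "psi1 (m,n,False) 0 = v"
    by (simp_all add: psi_ends amp_src_def edge_src_def amp_def u_def v_def algebra_simps)
  ultimately show ?thesis
    using coupling_admits_plane_wave[OF t12 t3] by simp
qed

definition "box_edges = {-1..N} \<times> {-1..N} \<times> (UNIV :: bool set)"

lemma amp_outside_box: "e \<notin> box_edges \<Longrightarrow> amp_src e = 0 \<and> amp_tgt e = 0"
  by (cases e) (auto simp: box_edges_def amp_src_def amp_tgt_def in_box_def edge_src_def
      edge_tgt_def)

lemma psi_in_domain: "lattice_op a (A3 (\<lambda>i j. 0) t1 t2 t3) (B3 t1 t2 t3) psi (\<lambda>e x. - psi2 e x)"
proof (rule lattice_op_smooth[where \<psi>' = psi1 and S = box_edges])
  show "finite box_edges" by (simp add: box_edges_def)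
  show "e \<notin> box_edges \<Longrightarrow> psi e = (\<lambda>x. 0) \<and> (\<lambda>x. - psi2 e x) = (\<lambda>x. 0)" for e
    using amp_outside_box[of e] by (simp add: psi_def psi2_def amp_jump_def fun_eq_iff)
qed (use psi_deriv psi1_deriv psi_vertex_cond a_pos in
      \<open>auto intro: continuous_intros psi2_continuous\<close>)

lemma psi_defect_on_edge:
  "edge_norm2 a (\<lambda>x. - psi2 e x - of_real (k^2) * psi e x) = (cmod (amp_jump e))^2 * defect_profile a k"
proof -
  have "- psi2 e x - of_real (k^2) * psi e x
        = - amp_jump e * (dwave2 (pi / a) k x + of_real (k^2) * dwave (pi / a) k x)" for x
    by (simp add: psi2_def psi_def algebra_simps)
  thus ?thesis
    by (simp add: edge_norm2_def defect_profile_def norm_mult power_mult_distrib)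
qed

text \<open>The Bloch multipliers have modulus one, so the plane wave is bounded, and the
  amplitude jumps across the boundary are uniformly bounded.\<close>
lemma norm_amp: "cmod (amp (m, n, d)) = (if d then cmod t2 else 1)"
proof -
  have "cmod eta = 1" by (simp add: eta_def)
  hence "cmod bloch_h = 1" "cmod bloch_v = 1"
    using t12 t3 bloch_nonzero by (auto simp: bloch_h_def bloch_v_def norm_mult norm_divide)
  thus ?thesis by (simp add: amp_def norm_mult norm_power_int)
qed

lemma amp_jump_bound: "(cmod (amp_jump e))^2 \<le> 1 + (cmod t2)^2"
proof -
  obtain m n d where e: "e = (m, n, d)" by (cases e) auto
  have "cmod (in_box (edge_src e) - in_box (edge_tgt e)) \<le> 1" by (simp add: in_box_def)
  hence "cmod (amp_jump e) \<le> cmod (amp e)"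
    by (simp add: amp_jump_def amp_src_def amp_tgt_def norm_mult mult_left_le_one_le
        flip: left_diff_distrib)
  hence "(cmod (amp_jump e))^2 \<le> (cmod (amp e))^2" by (simp add: power_mono)
  also have "\<dots> \<le> 1 + (cmod t2)^2" by (simp add: e norm_amp)
  finally show ?thesis .
qed

definition "boundary_edges =
  ({-1, N-1} \<times> {0..<N} \<times> {True}) \<union> ({0..<N} \<times> {-1, N-1} \<times> {False})"

lemma amp_jump_off_boundary: "e \<notin> boundary_edges \<Longrightarrow> amp_jump e = 0"
  by (cases e) (auto simp: boundary_edges_def amp_jump_def amp_src_def amp_tgt_def in_box_def
      edge_src_def edge_tgt_def)

lemma card_boundary_edges:
  assumes "N \<ge> 0"
  shows "real (card boundary_edges) \<le> 4 * of_int N"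
proof -
  have two: "card {-1, N-1} \<le> 2" by (rule card_insert_le_m1) auto
  have "card boundary_edges \<le>
        card ({-1, N-1} \<times> {0..<N} \<times> {True}) + card ({0..<N} \<times> {-1, N-1} \<times> {False})"
    unfolding boundary_edges_def by (rule card_Un_le)
  also have "\<dots> = card {-1, N-1} * nat N + nat N * card {-1, N-1}"
    by (simp only: card_cartesian_product card_atLeastLessThan_int card_1_singleton_iff) simp
  also have "\<dots> \<le> 2 * nat N + nat N * 2"
    using two by (intro add_mono mult_mono) auto
  finally show ?thesis using assms by linarith
qed

lemma psi_defect_bound:
  assumes "N \<ge> 0"
  shows "gnorm2 a (\<lambda>e x. - psi2 e x - of_real (k^2) * psi e x)
         \<le> 4 * of_int N * (1 + (cmod t2)^2) * defect_profile a k"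
proof -
  let ?g = "\<lambda>e. edge_norm2 a (\<lambda>x. - psi2 e x - of_real (k^2) * psi e x)"
  let ?M = "(1 + (cmod t2)^2) * defect_profile a k"
  have fin: "finite boundary_edges" by (simp add: boundary_edges_def)
  have "gnorm2 a (\<lambda>e x. - psi2 e x - of_real (k^2) * psi e x) = infsum ?g boundary_edges"
    unfolding gnorm2_def
  proof (rule infsum_cong_neutral)
    fix e assume "e \<in> UNIV - boundary_edges"
    thus "?g e = 0" by (subst psi_defect_on_edge) (simp add: amp_jump_off_boundary)
  qed auto
  also have "\<dots> = sum ?g boundary_edges" using fin by simp
  also have "\<dots> \<le> sum (\<lambda>_. ?M) boundary_edges"
    by (intro sum_mono, unfold psi_defect_on_edge)
       (intro mult_right_mono amp_jump_bound, simp add: defect_profile_def edge_norm2_nonneg)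
  also have "\<dots> = real (card boundary_edges) * ?M" by simp
  also have "\<dots> \<le> 4 * of_int N * ?M"
    by (rule mult_right_mono[OF card_boundary_edges[OF assms]])
       (simp add: defect_profile_def edge_norm2_nonneg)
  finally show ?thesis by (simp add: mult.assoc)
qed

text \<open>Lower bound for the norm: the N (N-1) vertical edges inside the box carry the
  full plane wave, of modulus one.\<close>
lemma psi_norm_bound:
  assumes "N \<ge> 1"
  shows "a * of_int N * of_int (N - 1) \<le> gnorm2 a psi"
proof -
  define inner where "inner = {0..<N} \<times> {0..<N-1} \<times> {False}"
  have inner_edge: "edge_norm2 a (psi (m, n, False)) = a"
    if "0 \<le> m" "m < N" "0 \<le> n" "n < N - 1" for m n
  proof -
    have "amp_jump (m, n, False) = 0" "amp_tgt (m, n, False) = amp (m, n, False)"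
      using that
      by (auto simp: amp_jump_def amp_src_def amp_tgt_def in_box_def edge_src_def edge_tgt_def)
    hence "(cmod (psi (m, n, False) x))\<^sup>2 = 1" for x by (simp add: psi_def norm_mult norm_amp)
    thus ?thesis using a_pos by (simp add: edge_norm2_def set_integral_const)
  qed
  have "a * of_int N * of_int (N - 1) = sum (\<lambda>_. a) inner"
    using assms by (simp add: inner_def card_cartesian_product)
  also have "\<dots> = infsum (\<lambda>_. a) inner" by (simp add: inner_def)
  also have "\<dots> \<le> infsum (\<lambda>e. edge_norm2 a (psi e)) UNIV"
  proof (rule infsum_mono_neutral)
    show "(\<lambda>_. a) summable_on inner" by (simp add: inner_def)
    show "(\<lambda>e. edge_norm2 a (psi e)) summable_on UNIV"
      using psi_in_domain unfolding lattice_op_def L2G_def by blast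
  qed (auto simp: inner_def inner_edge edge_norm2_nonneg)
  finally show ?thesis unfolding gnorm2_def .
qed

end

lemma approximate_eigenfunction:
  fixes a k :: real and t1 t2 t3 :: complex
  assumes a_pos: "a > 0" and t12: "cmod t1 = cmod t2" and t3: "cmod t3 = 1" and "\<epsilon> > 0"
  shows "\<exists>\<psi> h. lattice_op a (A3 (\<lambda>i j. 0) t1 t2 t3) (B3 t1 t2 t3) \<psi> h \<and> 0 < gnorm2 a \<psi> \<and>
           gnorm2 a (\<lambda>e x. h e x - of_real (k^2) * \<psi> e x) \<le> \<epsilon> * gnorm2 a \<psi>"
proof -
  define M where "M = 4 * (1 + (cmod t2)^2) * defect_profile a k"
  define N :: int where "N = \<lceil>M / (a * \<epsilon>)\<rceil> + 2"
  have "M \<ge> 0" by (simp add: M_def defect_profile_def edge_norm2_nonneg)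
  hence "M / (a * \<epsilon>) \<ge> 0" using a_pos \<open>\<epsilon> > 0\<close> by simp
  hence N: "N \<ge> 2" by (simp add: N_def)
  have "M / (a * \<epsilon>) < of_int (N - 1)" unfolding N_def by linarith
  hence M_small: "M \<le> a * \<epsilon> * of_int (N - 1)"
    using a_pos \<open>\<epsilon> > 0\<close> by (simp add: divide_less_eq mult.commute)
  let ?\<psi> = "psi a k t1 t2 t3 N" and ?h = "\<lambda>e x. - psi2 a k t1 t2 t3 N e x"
  have norm: "a * of_int N * of_int (N - 1) \<le> gnorm2 a ?\<psi>"
    using psi_norm_bound[OF a_pos t12 t3] N by simp
  have "gnorm2 a (\<lambda>e x. ?h e x - of_real (k^2) * ?\<psi> e x) \<le> of_int N * M"
    using psi_defect_bound[OF a_pos t12 t3, of N] N by (simp add: M_def mult_ac)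
  also have "\<dots> \<le> of_int N * (a * \<epsilon> * of_int (N - 1))"
    using M_small N by (intro mult_left_mono) auto
  also have "\<dots> \<le> \<epsilon> * gnorm2 a ?\<psi>"
    using mult_left_mono[OF norm, of \<epsilon>] \<open>\<epsilon> > 0\<close> by (simp add: mult_ac)
  finally show ?thesis
    using psi_in_domain[OF a_pos t12 t3] norm N a_pos
    by (intro exI conjI) (auto intro: less_le_trans[rotated])
qed

theorem mainTheorem10:
  fixes a :: real and t1 t2 t3 :: complex
  assumes "a > 0" and "cmod t1 = cmod t2" and "cmod t3 = 1"
  shows "{complex_of_real x | x. x \<ge> 0} \<subseteq>
           lattice_spectrum a (A3 (\<lambda>i j. 0) t1 t2 t3) (B3 t1 t2 t3)"
proof
  fix z assume "z \<in> {complex_of_real x | x. x \<ge> 0}"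
  then obtain x where "z = complex_of_real x" and "x \<ge> 0" by blast
  hence z: "z = of_real ((sqrt x)^2)" by simp
  show "z \<in> lattice_spectrum a (A3 (\<lambda>i j. 0) t1 t2 t3) (B3 t1 t2 t3)"
    unfolding z using approximate_eigenfunction[OF assms]
    by (intro approximate_eigenvalue_in_spectrum)
qed

end
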